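(* Let $m>n$ and let $\mathbf{A}\in\mathbb{R}^{m\times n}$ have rank $n$, partitioned by rows as $\mathbf{A} = \begin{bmatrix}\mathbf{X}\\ \mathbf{Y}\end{bmatrix}$ with $\mathbf{X}\in\mathbb{R}^{n\times n}$ invertible (the top $n$ rows form a full-rank square matrix) and $\mathbf{Y}\in\mathbb{R}^{(m-n)\times n}$. Let $\mathbf{A} = \mathbf{L}\mathbf{Q}$ be its LQ decomposition with $\mathbf{Q}\in\mathbb{R}^{n\times n}$ orthogonal and $\mathbf{L}\in\mathbb{R}^{m\times n}$ lower triangular, partitioned as $\mathbf{L} = \begin{bmatrix}\mathbf{U}\\ \mathbf{V}\end{bmatrix}$ with $\mathbf{U}\in\mathbb{R}^{n\times n}$ (lower triangular, invertible, $\mathbf{X} = \mathbf{U}\mathbf{Q}$) and $\mathbf{V}\in\mathbb{R}^{(m-n)\times n}$ ($\mathbf{Y} = \mathbf{V}\mathbf{Q}$). Suppose $\mathbf{A}'\mapsto(\mathbf{L}(\mathbf{A}'),\mathbf{Q}(\mathbf{A}'))$ is a differentiable map on a neighborhood of $\mathbf{A}$ giving such a decomposition for each $\mathbf{A}'$ (e.g. normalized so $\mathbf{L}$ has positive diagonal). Let $\bar{\mathbf{Q}}\in\mathbb{R}^{n\times n}$ and $\bar{\mathbf{L}} = \begin{bmatrix}\bar{\mathbf{U}}\\ \bar{\mathbf{V}}\end{bmatrix}\in\mathbb{R}^{m\times n}$ be arbitrary upstream gradients, with $\bar{\mathbf{U}}\in\mathbb{R}^{n\times n}$, $\bar{\mathbf{V}}\in\mathbb{R}^{(m-n)\times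 n}$. Then the reverse-mode gradient is $\bar{\mathbf{A}} = \begin{bmatrix}\bar{\mathbf{X}}\\ \bar{\mathbf{Y}}\end{bmatrix}$ with $$\bar{\mathbf{X}} = \mathbf{U}^{-T}\left[\bar{\mathbf{Q}}_{prime} + \mathrm{copyltu}(\mathbf{M})\mathbf{Q}\right],\qquad \bar{\mathbf{Y}} = \bar{\mathbf{V}}\mathbf{Q},$$ where $\bar{\mathbf{Q}}_{prime} = \bar{\mathbf{Q}} + \bar{\mathbf{V}}^T\mathbf{Y}$ and $\mathbf{M} = \mathbf{U}^T\bar{\mathbf{U}} - \bar{\mathbf{Q}}_{prime}\mathbf{Q}^T$.
   Context: Reverse-mode gradient: given a differentiable map $\mathbf{A}\mapsto(\mathbf{L}(\mathbf{A}),\mathbf{Q}(\mathbf{A}))$ and upstream matrices $\bar{\mathbf{L}},\bar{\mathbf{Q}}$ of the same shapes as $\mathbf{L},\mathbf{Q}$, the gradient $\bar{\mathbf{A}}$ is the unique matrix of the shape of $\mathbf{A}$ such that $\mathrm{Tr}(\bar{\mathbf{A}}^T d\mathbf{A}) = \mathrm{Tr}(\bar{\mathbf{L}}^T d\mathbf{L}) + \mathrm{Tr}(\bar{\mathbf{Q}}^T d\mathbf{Q})$ for every direction $d\mathbf{A}$, where $d\mathbf{L}, d\mathbf{Q}$ are the directional derivatives of $\mathbf{L},\mathbf{Q}$ at $\mathbf{A}$ in direction $d\mathbf{A}$. For a square matrix $\mathbf{M}$, $\mathrm{copyltu}(\mathbf{M})$ is the symmetric matrix with entries $\mathrm{copyltu}(\mathbf{M})_{ij}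 = \mathbf{M}_{\max(i,j),\min(i,j)}$; equivalently $\mathrm{copyltu}(\mathbf{M}) = \mathrm{sym}(\mathbf{M}\circ\mathbf{E})$, where $\mathrm{sym}(\mathbf{B}) = (\mathbf{B}+\mathbf{B}^T)/2$, $\circ$ is the Hadamard product and $\mathbf{E}$ has $e_{ij}=0$ if $i<j$, $1$ if $i=j$, $2$ if $i>j$. $\mathbf{U}^{-T} = (\mathbf{U}^{-1})^T$. *)

theory Defs
  imports "HOL-Analysis.Analysis"
begin

definition lower_triangular :: "real^('n::{finite,linorder})^('n::{finite,linorder}) \<Rightarrow> bool" where
  "lower_triangular U \<longleftrightarrow>
     (\<forall>i j. i < j \<longrightarrow> U $ i $ j = 0)"

definition copyltu :: "real^('n::{finite,linorder})^('n::{finite,linorder}) \<Rightarrow> real^('n::{finite,linorder})^('n::{finite,linorder})" where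
  "copyltu M = (\<chi> i j. M $ (max i j) $ (min i j))"

text \<open>LQ decomposition of the block matrix A = [X; Y] (X square, n x n; Y of size (m-n) x n):
  L = [U; V] lower triangular (i.e. U lower triangular), Q orthogonal, X = U Q, Y = V Q.\<close>
definition is_LQ_block ::
  "real^('n::{finite,linorder})^('n::{finite,linorder}) \<Rightarrow> real^('n::{finite,linorder})^('k::finite) \<Rightarrow> real^('n::{finite,linorder})^('n::{finite,linorder}) \<Rightarrow> real^('n::{finite,linorder})^('k::finite) \<Rightarrow> real^('n::{finite,linorder})^('n::{finite,linorder}) \<Rightarrow> bool" where
  "is_LQ_block X Y U V Q \<longleftrightarrow>
     lower_triangular U \<and> orthogonal_matrix Q \<and> X = U ** Q \<and> Y = V ** Q"

end

theory Submission
  imports Defs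
begin

text \<open>Differentiating the constraints X = U Q, Y = V Q, Q Q^T = I on a neighbourhood gives
  dX = dU Q + U dQ and dY = dV Q + V dQ, where \<Omega> = dQ Q^T is skew-symmetric and
  D = U^-1 dU is lower triangular. Pairing the candidate gradient with (dX, dY) in the Frobenius
  inner product and moving all factors onto dQ and D, the difference from the pairing of the
  upstream gradients with (dU, dV, dQ) reduces to two terms: M against the lower triangular D,
  where M may be replaced by the symmetric copyltu(M), and a symmetric matrix against the
  skew \<Omega>, which vanishes.\<close>

lemma permutes_decreasing_eq_id:
  fixes p :: "'n::{finite,linorder} \<Rightarrow> 'n"
  assumes p: "p permutes UNIV" and decreasing: "\<And>i. p i \<le> i"
  shows "p = id"
proof (rule ccontr)
  assume "p \<noteq> id"
  then have moved: "{i. p i \<noteq> i} \<noteq> {}" by (auto simp: fun_eq_iff)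
  define i0 where "i0 = Min {i. p i \<noteq> i}"
  have "p i0 \<noteq> i0" using Min_in[OF _ moved] i0_def by auto
  then have "p i0 < i0" using decreasing[of i0] by auto
  have "p (p i0) = p i0"
  proof (rule ccontr)
    assume "p (p i0) \<noteq> p i0"
    then have "i0 \<le> p i0" unfolding i0_def by (intro Min_le) auto
    then show False using \<open>p i0 < i0\<close> by auto
  qed
  then show False using \<open>p i0 \<noteq> i0\<close> permutes_inj[OF p] by (auto dest: injD)
qed

lemma det_lower_triangular:
  fixes A :: "real^('n::{finite,linorder})^('n::{finite,linorder})"
  assumes "lower_triangular A"
  shows "det A = (\<Prod>i\<in>UNIV. A$i$i)"
proof -
  let ?term = "\<lambda>p. of_int (sign p) * (\<Prod>i\<in>UNIV. A$i$p i)"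
  have "\<forall>p \<in> {p. p permutes UNIV} - {id}. ?term p = 0"
  proof
    fix p :: "'n \<Rightarrow> 'n" assume "p \<in> {p. p permutes UNIV} - {id}"
    then have "\<not> (\<forall>i. p i \<le> i)" using permutes_decreasing_eq_id by blast
    then obtain i where "i < p i" by (auto simp: not_le)
    then have "A$i$p i = 0" using assms unfolding lower_triangular_def by blast
    then show "?term p = 0" by auto
  qed
  from sum.mono_neutral_cong_left[OF finite_permutations[OF finite_class.finite_UNIV] _ this]
  show ?thesis unfolding det_def by simp
qed

lemma lower_triangular_invertible_diag_nonzero:
  fixes U :: "real^('n::{finite,linorder})^('n::{finite,linorder})"
  assumes "lower_triangular U" "invertible U"
  shows "U$i$i \<noteq> 0"
proof -
  have "det U \<noteq> 0" using assms(2) invertible_det_nz by blast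
  then have "(\<Prod>i\<in>UNIV. U$i$i) \<noteq> 0" using det_lower_triangular[OF assms(1)] by simp
  then show ?thesis by simp
qed

lemma lower_triangular_right_inverse:
  fixes U W :: "real^('n::{finite,linorder})^('n::{finite,linorder})"
  assumes L: "lower_triangular U" and UW: "U ** W = mat 1"
  shows "lower_triangular W"
  unfolding lower_triangular_def
proof (rule ccontr)
  assume "\<not> (\<forall>i j. i < j \<longrightarrow> W$i$j = 0)"
  then have bad: "{i. \<exists>j>i. W$i$j \<noteq> 0} \<noteq> {}" by auto
  define i0 where "i0 = Min {i. \<exists>j>i. W$i$j \<noteq> 0}"
  obtain j where j: "i0 < j" "W$i0$j \<noteq> 0" using Min_in[OF _ bad] i0_def by auto
  have above_i0: "W$k$j = 0" if "k < i0" for k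
  proof (rule ccontr)
    assume "W$k$j \<noteq> 0"
    then have "k \<in> {i. \<exists>j>i. W$i$j \<noteq> 0}" using that j(1) less_trans by blast
    then have "i0 \<le> k" unfolding i0_def by (intro Min_le) auto
    then show False using that by simp
  qed
  have "(U ** W)$i0$j = (\<Sum>k\<in>UNIV. if k = i0 then U$i0$i0 * W$i0$j else 0)"
    unfolding matrix_matrix_mult_def vec_lambda_beta
  proof (rule sum.cong[OF refl])
    fix k show "U$i0$k * W$k$j = (if k = i0 then U$i0$i0 * W$i0$j else 0)"
      using L above_i0[of k] unfolding lower_triangular_def by (cases k i0 rule: linorder_cases) auto
  qed
  then have "(U ** W)$i0$j = U$i0$i0 * W$i0$j" by simp
  moreover have "(U ** W)$i0$j = 0" using UW j(1) by (simp add: mat_def)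
  moreover have "invertible U" using UW invertible_right_inverse by blast
  ultimately show False
    using j(2) lower_triangular_invertible_diag_nonzero[OF L] by simp
qed

lemma lower_triangular_mult:
  fixes A B :: "real^('n::{finite,linorder})^('n::{finite,linorder})"
  assumes "lower_triangular A" "lower_triangular B"
  shows "lower_triangular (A ** B)"
  unfolding lower_triangular_def
proof (intro allI impI)
  fix i j :: 'n assume "i < j"
  then have vanish: "A$i$k * B$k$j = 0" for k
    using assms unfolding lower_triangular_def by (cases "k \<le> i") auto
  show "(A ** B)$i$j = 0"
    unfolding matrix_matrix_mult_def vec_lambda_beta by (simp only: vanish sum.neutral_const)
qed

lemma matrix_inv_inverse:
  fixes A :: "'a::field^'n^'n"
  assumes "invertible A"
  shows "A ** matrix_inv A = mat 1" and "matrix_inv A ** A = mat 1"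
proof -
  have "A ** matrix_inv A = mat 1 \<and> matrix_inv A ** A = mat 1"
    using assms unfolding invertible_def matrix_inv_def by (rule someI_ex)
  then show "A ** matrix_inv A = mat 1" and "matrix_inv A ** A = mat 1" by auto
qed

definition frobenius_inner :: "real^'c^'r \<Rightarrow> real^'c^'r \<Rightarrow> real" where
  "frobenius_inner A B = trace (transpose A ** B)"

lemma frobenius_inner_sum: "frobenius_inner A B = (\<Sum>i\<in>UNIV. \<Sum>k\<in>UNIV. A$k$i * B$k$i)"
  by (simp add: frobenius_inner_def trace_def matrix_matrix_mult_def transpose_def)

lemma frobenius_inner_add_left: "frobenius_inner (A + B) C = frobenius_inner A C + frobenius_inner B C"
  by (simp add: frobenius_inner_sum sum.distrib algebra_simps)

lemma frobenius_inner_add_right: "frobenius_inner A (B + C) = frobenius_inner A B + frobenius_inner A C"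
  by (simp add: frobenius_inner_sum sum.distrib algebra_simps)

lemma frobenius_inner_diff_left: "frobenius_inner (A - B) C = frobenius_inner A C - frobenius_inner B C"
  by (simp add: frobenius_inner_sum sum_subtractf algebra_simps)

lemma frobenius_inner_move_left_factor:
  "frobenius_inner (B ** A) C = frobenius_inner A (transpose B ** C)"
  by (simp add: frobenius_inner_def matrix_transpose_mul matrix_mul_assoc)

lemma frobenius_inner_move_right_factor:
  "frobenius_inner (A ** C) B = frobenius_inner A (B ** transpose C)"
proof -
  have "frobenius_inner (A ** C) B = trace (transpose C ** (transpose A ** B))"
    by (simp add: frobenius_inner_def matrix_transpose_mul matrix_mul_assoc)
  also have "\<dots> = trace ((transpose A ** B) ** transpose C)" by (rule trace_mul_sym)
  finally show ?thesis by (simp add: frobenius_inner_def matrix_mul_assoc)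
qed

lemma frobenius_inner_commute: "frobenius_inner A B = frobenius_inner B A"
  by (simp add: frobenius_inner_sum mult.commute)

lemma frobenius_inner_transpose: "frobenius_inner (transpose A) (transpose B) = frobenius_inner A B"
  by (simp add: frobenius_inner_sum transpose_def) (rule sum.swap)

lemma frobenius_inner_symmetric_skew:
  assumes "transpose S = S" "transpose K = - K"
  shows "frobenius_inner S K = 0"
proof -
  have "frobenius_inner S K = frobenius_inner S (- K)"
    using frobenius_inner_transpose[of S K] assms by simp
  also have "\<dots> = - frobenius_inner S K" by (simp add: frobenius_inner_sum sum_negf)
  finally show ?thesis by simp
qed

lemma frobenius_inner_strictly_upper_lower:
  fixes K D :: "real^('n::{finite,linorder})^('n::{finite,linorder})"
  assumes "\<And>i j. j \<le> i \<Longrightarrow> K$i$j = 0" "lower_triangular D"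
  shows "frobenius_inner K D = 0"
proof -
  have vanish: "K$k$i * D$k$i = 0" for k i
    using assms unfolding lower_triangular_def by (cases "i \<le> k") auto
  show ?thesis unfolding frobenius_inner_sum by (simp only: vanish sum.neutral_const)
qed

lemma transpose_copyltu: "transpose (copyltu M) = copyltu M"
  by (simp add: copyltu_def transpose_def vec_eq_iff max.commute min.commute)

lemma frobenius_inner_copyltu_lower_triangular:
  assumes "lower_triangular D"
  shows "frobenius_inner (copyltu M) D = frobenius_inner M D"
proof -
  have "frobenius_inner (copyltu M - M) D = 0"
    by (rule frobenius_inner_strictly_upper_lower[OF _ assms]) (simp add: copyltu_def max_def min_def)
  then show ?thesis by (simp add: frobenius_inner_diff_left)
qed

lemma frobenius_inner_symmetric_mult_tangent:
  assumes tangent: "Q ** transpose dQ + dQ ** transpose Q = 0" and "transpose S = S"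
  shows "frobenius_inner (S ** Q) dQ = 0"
proof -
  have skew: "transpose (dQ ** transpose Q) = - (dQ ** transpose Q)"
    using tangent by (simp add: matrix_transpose_mul eq_neg_iff_add_eq_0 add.commute)
  have "frobenius_inner (S ** Q) dQ = frobenius_inner S (dQ ** transpose Q)"
    by (rule frobenius_inner_move_right_factor)
  also have "\<dots> = 0" by (rule frobenius_inner_symmetric_skew[OF assms(2) skew])
  finally show ?thesis .
qed

lemma bounded_bilinear_matrix_mult:
  "bounded_bilinear (\<lambda>(A::real^'n^'m) (B::real^'p^'n). A ** B)"
proof -
  have "bilinear (\<lambda>(A::real^'n^'m) (B::real^'p^'n). A ** B)"
    unfolding bilinear_def
    by (intro conjI allI linearI)
      (simp_all add: vec_eq_iff matrix_matrix_mult_def sum.distrib algebra_simps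
        sum_distrib_left scaleR_sum_right)
  then show ?thesis using bilinear_conv_bounded_bilinear by blast
qed

lemma bounded_linear_transpose: "bounded_linear (transpose :: real^'n^'m \<Rightarrow> _)"
  by (intro linear_conv_bounded_linear[THEN iffD1] linearI) (simp_all add: vec_eq_iff transpose_def)

lemma transpose_add: "transpose (A + B) = transpose A + transpose (B :: real^'n^'m)"
  by (simp add: vec_eq_iff transpose_def)

lemma has_derivative_unique_on_open:
  assumes "(f has_derivative f') (at x)" "(g has_derivative g') (at x)" "open S" "x \<in> S"
    and "\<And>y. y \<in> S \<Longrightarrow> f y = g y"
  shows "f' = g'"
  using has_derivative_transform_within_open[OF assms(1,3,4,5)] assms(2) has_derivative_unique
  by blast

lemma LQ_block_differential:
  fixes Uf Qf dUf dQf :: "(real^('n::{finite,linorder})^('n::{finite,linorder})) \<times> (real^('n::{finite,linorder})^'k) \<Rightarrow> real^('n::{finite,linorder})^('n::{finite,linorder})"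
    and Vf dVf :: "(real^('n::{finite,linorder})^('n::{finite,linorder})) \<times> (real^('n::{finite,linorder})^'k) \<Rightarrow> real^('n::{finite,linorder})^'k"
  assumes "open S" "x \<in> S"
    and LQ: "\<And>p. p \<in> S \<Longrightarrow> is_LQ_block (fst p) (snd p) (Uf p) (Vf p) (Qf p)"
    and dU: "(Uf has_derivative dUf) (at x)"
    and dV: "(Vf has_derivative dVf) (at x)"
    and dQ: "(Qf has_derivative dQf) (at x)"
  shows "fst h = Uf x ** dQf h + dUf h ** Qf x"
    and "snd h = Vf x ** dQf h + dVf h ** Qf x"
    and "Qf x ** transpose (dQf h) + dQf h ** transpose (Qf x) = 0"
    and "lower_triangular (dUf h)"
proof -
  note product_rule = bounded_bilinear.FDERIV[OF bounded_bilinear_matrix_mult]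
  have "(\<lambda>h. Uf x ** dQf h + dUf h ** Qf x) = fst"
    by (rule has_derivative_unique_on_open[OF product_rule[OF dU dQ]
          has_derivative_fst[OF has_derivative_ident] assms(1,2)])
      (use LQ in \<open>auto simp: is_LQ_block_def\<close>)
  from fun_cong[OF this, of h] show "fst h = Uf x ** dQf h + dUf h ** Qf x" by simp
  have "(\<lambda>h. Vf x ** dQf h + dVf h ** Qf x) = snd"
    by (rule has_derivative_unique_on_open[OF product_rule[OF dV dQ]
          has_derivative_snd[OF has_derivative_ident] assms(1,2)])
      (use LQ in \<open>auto simp: is_LQ_block_def\<close>)
  from fun_cong[OF this, of h] show "snd h = Vf x ** dQf h + dVf h ** Qf x" by simp
  have "(\<lambda>h. Qf x ** transpose (dQf h) + dQf h ** transpose (Qf x)) = (\<lambda>h. 0)"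
    by (rule has_derivative_unique_on_open[OF
          product_rule[OF dQ bounded_linear.has_derivative[OF bounded_linear_transpose dQ]]
          has_derivative_const[of "mat 1"] assms(1,2)])
      (use LQ in \<open>auto simp: is_LQ_block_def orthogonal_matrix_def\<close>)
  from fun_cong[OF this, of h]
  show "Qf x ** transpose (dQf h) + dQf h ** transpose (Qf x) = 0" by simp
  have "(\<lambda>h. dUf h $ i $ j) = (\<lambda>h. 0)" if "i < j" for i j
  proof -
    have "bounded_linear (\<lambda>A. A $ i $ j :: real)"
      by (rule bounded_linear_compose[OF bounded_linear_vec_nth bounded_linear_vec_nth])
    from bounded_linear.has_derivative[OF this dU] show ?thesis
      by (rule has_derivative_unique_on_open[OF _ has_derivative_const[of 0] assms(1,2)])
        (use LQ that in \<open>auto simp: is_LQ_block_def lower_triangular_def\<close>)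
  qed
  then show "lower_triangular (dUf h)" unfolding lower_triangular_def by (metis fun_cong)
qed

lemma LQ_block_backprop:
  fixes U Q Ubar Qbar dX dU dQ :: "real^('n::{finite,linorder})^('n::{finite,linorder})"
    and V Y Vbar dY dV :: "real^('n::{finite,linorder})^'k"
  assumes LU: "lower_triangular U" and U_inv: "invertible U" and orth: "orthogonal_matrix Q"
    and Y: "Y = V ** Q"
    and dX: "dX = U ** dQ + dU ** Q" and dY: "dY = V ** dQ + dV ** Q"
    and tangent: "Q ** transpose dQ + dQ ** transpose Q = 0" and LdU: "lower_triangular dU"
  defines "Qbar' \<equiv> Qbar + transpose Vbar ** Y"
  defines "M \<equiv> transpose U ** Ubar - Qbar' ** transpose Q"
  shows "frobenius_inner (transpose (matrix_inv U) ** (Qbar' + copyltu M ** Q)) dX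
           + frobenius_inner (Vbar ** Q) dY
         = frobenius_inner Ubar dU + frobenius_inner Vbar dV + frobenius_inner Qbar dQ"
proof -
  define W where "W = matrix_inv U"
  define D where "D = W ** dU"
  define G where "G = Qbar' + copyltu M ** Q"
  have QQt: "Q ** transpose Q = mat 1" using orth by (simp add: orthogonal_matrix_def)
  have UW: "U ** W = mat 1" and WU: "W ** U = mat 1"
    using matrix_inv_inverse[OF U_inv] by (simp_all add: W_def)
  have LD: "lower_triangular D"
    unfolding D_def by (rule lower_triangular_mult[OF lower_triangular_right_inverse[OF LU UW] LdU])
  have dU_D: "dU = U ** D" by (simp add: D_def matrix_mul_assoc UW)
  have "frobenius_inner (transpose W ** G) dX = frobenius_inner G (dQ + D ** Q)"
    by (simp add: frobenius_inner_move_left_factor dX D_def matrix_add_ldistrib matrix_mul_assoc WU)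
  also have "\<dots> = frobenius_inner G dQ + frobenius_inner (G ** transpose Q) D"
    by (simp add: frobenius_inner_add_right frobenius_inner_commute[of G] frobenius_inner_move_right_factor)
  also have "G ** transpose Q = Qbar' ** transpose Q + copyltu M"
    by (simp add: G_def bounded_bilinear.add_left[OF bounded_bilinear_matrix_mult]
        matrix_mul_assoc[symmetric] QQt)
  finally have X_part: "frobenius_inner (transpose W ** G) dX
      = frobenius_inner G dQ + frobenius_inner (Qbar' ** transpose Q) D + frobenius_inner M D"
    by (simp add: frobenius_inner_add_left frobenius_inner_copyltu_lower_triangular[OF LD])
  have "frobenius_inner (Vbar ** Q) (V ** dQ) = frobenius_inner (transpose V ** Vbar ** Q) dQ"
    using frobenius_inner_move_left_factor[of V dQ "Vbar ** Q"] frobenius_inner_commute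
    by (metis matrix_mul_assoc)
  moreover have "frobenius_inner (Vbar ** Q) (dV ** Q) = frobenius_inner Vbar dV"
    using frobenius_inner_move_right_factor[of Vbar Q "dV ** Q"]
    by (simp add: matrix_mul_assoc[symmetric] QQt)
  ultimately have Y_part: "frobenius_inner (Vbar ** Q) dY
      = frobenius_inner (transpose V ** Vbar ** Q) dQ + frobenius_inner Vbar dV"
    by (simp add: dY frobenius_inner_add_right)
  have U_part: "frobenius_inner Ubar dU = frobenius_inner M D + frobenius_inner (Qbar' ** transpose Q) D"
  proof -
    have "frobenius_inner Ubar dU = frobenius_inner (transpose U ** Ubar) D"
      by (simp add: dU_D frobenius_inner_commute[of Ubar] frobenius_inner_move_left_factor)
    then show ?thesis by (simp add: M_def frobenius_inner_diff_left)
  qed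
  \<comment> \<open>The dQ-terms not accounted for by Qbar are Sym ** Q with Sym symmetric.\<close>
  define Sym where "Sym = transpose Vbar ** V + copyltu M + transpose V ** Vbar"
  have "transpose Sym = Sym"
    by (simp add: Sym_def transpose_add transpose_copyltu matrix_transpose_mul)
  then have "frobenius_inner (Sym ** Q) dQ = 0"
    by (rule frobenius_inner_symmetric_mult_tangent[OF tangent])
  then have Q_part: "frobenius_inner G dQ + frobenius_inner (transpose V ** Vbar ** Q) dQ
      = frobenius_inner Qbar dQ"
    by (simp add: G_def Sym_def Qbar'_def Y frobenius_inner_add_left
        bounded_bilinear.add_left[OF bounded_bilinear_matrix_mult] matrix_mul_assoc)
  show ?thesis
    using X_part Y_part U_part Q_part by (simp add: W_def G_def)
qed

theorem proposition3:
  fixes X :: "real^('n::{finite,linorder})^('n::{finite,linorder})"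
    and Y :: "real^('n::{finite,linorder})^('k::finite)"
    and Uf Qf :: "(real^('n::{finite,linorder})^('n::{finite,linorder})) \<times> (real^('n::{finite,linorder})^('k::finite)) \<Rightarrow> real^('n::{finite,linorder})^('n::{finite,linorder})"
    and Vf :: "(real^('n::{finite,linorder})^('n::{finite,linorder})) \<times> (real^('n::{finite,linorder})^('k::finite)) \<Rightarrow> real^('n::{finite,linorder})^('k::finite)"
    and dUf dQf :: "(real^('n::{finite,linorder})^('n::{finite,linorder})) \<times> (real^('n::{finite,linorder})^('k::finite)) \<Rightarrow> real^('n::{finite,linorder})^('n::{finite,linorder})"
    and dVf :: "(real^('n::{finite,linorder})^('n::{finite,linorder})) \<times> (real^('n::{finite,linorder})^('k::finite)) \<Rightarrow> real^('n::{finite,linorder})^('k::finite)"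
    and S :: "((real^('n::{finite,linorder})^('n::{finite,linorder})) \<times> (real^('n::{finite,linorder})^('k::finite))) set"
    and Ubar Qbar :: "real^('n::{finite,linorder})^('n::{finite,linorder})" and Vbar :: "real^('n::{finite,linorder})^('k::finite)"
  assumes X_inv: "invertible X"
    and S_open: "open S" and A_in: "(X, Y) \<in> S"
    and LQ: "\<And>X' Y'. (X', Y') \<in> S \<Longrightarrow>
               is_LQ_block X' Y' (Uf (X', Y')) (Vf (X', Y')) (Qf (X', Y'))"
    and dU: "(Uf has_derivative dUf) (at (X, Y))"
    and dV: "(Vf has_derivative dVf) (at (X, Y))"
    and dQ: "(Qf has_derivative dQf) (at (X, Y))"
  defines "U \<equiv> Uf (X, Y)" and "V \<equiv> Vf (X, Y)" and "Q \<equiv> Qf (X, Y)"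
  defines "Qbar' \<equiv> Qbar + transpose Vbar ** Y"
  defines "M \<equiv> transpose U ** Ubar - Qbar' ** transpose Q"
  defines "Xbar \<equiv> transpose (matrix_inv U) ** (Qbar' + copyltu M ** Q)"
  defines "Ybar \<equiv> Vbar ** Q"
  shows "\<forall>dX dY.
           trace (transpose Xbar ** dX) + trace (transpose Ybar ** dY) =
           trace (transpose Ubar ** dUf (dX, dY)) + trace (transpose Vbar ** dVf (dX, dY))
           + trace (transpose Qbar ** dQf (dX, dY))"
proof (intro allI)
  fix dX dY
  have LQ_on_S: "\<And>p. p \<in> S \<Longrightarrow> is_LQ_block (fst p) (snd p) (Uf p) (Vf p) (Qf p)"
    using LQ by (metis prod.collapse)
  have "is_LQ_block X Y U V Q" using LQ[OF A_in] by (simp add: U_def V_def Q_def)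
  then have LU: "lower_triangular U" and orth: "orthogonal_matrix Q"
    and X_UQ: "X = U ** Q" and Y_VQ: "Y = V ** Q" by (auto simp: is_LQ_block_def)
  have "invertible (transpose Q)"
    using orth unfolding orthogonal_matrix_def invertible_def by auto
  moreover have "U = X ** transpose Q"
    using X_UQ orth by (simp add: orthogonal_matrix_def matrix_mul_assoc[symmetric])
  ultimately have U_inv: "invertible U" using invertible_mult[OF X_inv] by simp
  note differential = LQ_block_differential[OF S_open A_in LQ_on_S dU dV dQ, of "(dX, dY)",
      folded U_def V_def Q_def, simplified]
  have "frobenius_inner Xbar dX + frobenius_inner Ybar dY
      = frobenius_inner Ubar (dUf (dX, dY)) + frobenius_inner Vbar (dVf (dX, dY))
        + frobenius_inner Qbar (dQf (dX, dY))"
    unfolding Xbar_def Ybar_def M_def Qbar'_def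
    by (rule LQ_block_backprop[OF LU U_inv orth Y_VQ differential])
  then show "trace (transpose Xbar ** dX) + trace (transpose Ybar ** dY) =
      trace (transpose Ubar ** dUf (dX, dY)) + trace (transpose Vbar ** dVf (dX, dY))
      + trace (transpose Qbar ** dQf (dX, dY))"
    by (simp add: frobenius_inner_def)
qed

end
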